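(* Assume Assumptions A, B, C hold, let $w^{(t)}$ be generated by Algorithm 1 with $\eta^{(t)}=D\sqrt{\varepsilon}$ ($D>0$), and suppose $\alpha_i^{(t)}\le\alpha/L_\phi$ for some $\alpha\in(0,\tfrac13)$. Then for all $i\in[n]$ and $0\le t<T$, $$\|h(w^{(t+1)};i)-h_i^*\|^2\le(1+\varepsilon)\|h(w^{(t)};i)-h_i^*\|^2-2(1-3\alpha)\alpha_i^{(t)}\big[\phi_i(h(w^{(t)};i))-\phi_i(h_i^* )\big]+\frac{3\varepsilon+2}{4}c\big(4+(V+2)GD^2\big)^2\varepsilon+\frac{3\varepsilon+2}{\varepsilon}\big\|\eta^{(t)}H_i^{(t)}v_{*\mathrm{reg}}^{(t)}-\alpha_i^{(t)}\nabla\phi_i(h(w^{(t)};i))\big\|^2.$$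
   Context: Let $n,c,d$ be positive integers and $[n]=\{1,\dots,n\}$. For each $i\in[n]$ let $h(\cdot;i):\mathbb{R}^d\to\mathbb{R}^c$ (components $h_j(\cdot;i)$) and $\phi_i:\mathbb{R}^c\to\mathbb{R}$. Each $\phi_i$ attains its minimum at $h_i^*$. Norms: Euclidean for vectors, operator for matrices. Assumption A: each $\phi_i$ is convex, bounded below, and $L_\phi$-smooth. Assumption B: each $h(\cdot;i)$ is twice continuously differentiable and there is $G>0$ with $\|\nabla_w^2 h_j(w;i)\|\le G$ for all $w,i,j$. Iteration setup: given $\varepsilon>0$, $\eta^{(t)}>0$, $\alpha_i^{(t)}>0$ and iterates $w^{(t)}$, let $H_i^{(t)}$ be the Jacobian of $h(\cdot;i)$ at $w^{(t)}$, $\Phi^{(t)}(v)=\frac{1}{2n}\sum_{i=1}^n\|\eta^{(t)}H_i^{(t)}v-\alpha_i^{(t)}\nabla\phi_i(h(w^{(t)};i))\|^2$, $\Psi^{(t)}(v)=\Phi^{(t)}(v)+\frac{\varepsilon^2}{2}\|v\|^2$, $v_{*\mathrm{reg}}^{(t)}$ its unique minimizer. Algorithm 1: $w^{(0)}$ arbitrary, $w^{(t+1)}=w^{(t)}-\eta^{(t)}v_{*\mathrm{reg}}^{(t)}$, $t=0,\dots,T-1$. Assumption C (constant $V>0$): for each $0\le t<T$ there is $\hat v^{(t)}$ with $\|\hat v^{(t)}\|^2\le V$ and $\Phi^{(t)}(\hat v^{(t)})\le\varepsilon^2$. *)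

theory Defs
  imports "HOL-Analysis.Analysis"
begin

text \<open>Phi^(t)(v) = 1/(2n) sum_{i=1..n} || eta H_i v - a_i g_i ||^2, where
  H i is the Jacobian of h(.;i) at w^(t), a i = alpha_i^(t), g i = grad phi_i(h(w^(t);i)).\<close>
definition Phi_obj :: "nat \<Rightarrow> real \<Rightarrow> (nat \<Rightarrow> real^'d^'c) \<Rightarrow> (nat \<Rightarrow> real)
    \<Rightarrow> (nat \<Rightarrow> real^'c) \<Rightarrow> real^'d \<Rightarrow> real" where
  "Phi_obj n \<eta> H a g v =
     (1 / (2 * real n)) * (\<Sum>i=1..n. (norm (\<eta> *\<^sub>R (H i *v v) - a i *\<^sub>R g i))\<^sup>2)"

definition Psi_obj :: "real \<Rightarrow> nat \<Rightarrow> real \<Rightarrow> (nat \<Rightarrow> real^'d^'c) \<Rightarrow> (nat \<Rightarrow> real)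
    \<Rightarrow> (nat \<Rightarrow> real^'c) \<Rightarrow> real^'d \<Rightarrow> real" where
  "Psi_obj \<epsilon> n \<eta> H a g v = Phi_obj n \<eta> H a g v + \<epsilon>\<^sup>2 / 2 * (norm v)\<^sup>2"

end

theory Submission
  imports Defs
begin

text \<open>Fix \<open>i\<close> and \<open>t\<close>; let \<open>u = h(w\<^sub>t;i) - h\<^sub>i\<^sup>*\<close>, \<open>g = \<nabla>\<phi>\<^sub>i(h(w\<^sub>t;i))\<close> and \<open>d = \<eta> v\<close>,
  where \<open>v\<close> is the regularised minimiser. Then
  \<open>h(w\<^sub>t\<^sub>+\<^sub>1;i) - h\<^sub>i\<^sup>* = (u - \<alpha>\<^sub>i g) + (r - \<delta>)\<close>, where \<open>\<delta> = \<eta> H\<^sub>i v - \<alpha>\<^sub>i g\<close> is the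
  least-squares residual and \<open>r\<close> is the second-order Taylor remainder of \<open>h(\<cdot>;i)\<close> along \<open>-d\<close>.
  Convexity and smoothness of \<open>\<phi>\<^sub>i\<close> make \<open>u - \<alpha>\<^sub>i g\<close> a contracting gradient step, and
  Young's inequality with weight \<open>\<epsilon>\<close> splits off the perturbation \<open>r - \<delta>\<close>. Comparing the
  regularised objective at \<open>v\<close> with the point provided by Assumption C gives
  \<open>\<parallel>v\<parallel>\<^sup>2 \<le> V + 2\<close>, so with \<open>\<eta>\<^sup>2 = D\<^sup>2\<epsilon>\<close> the Hessian bound makes every component of \<open>r\<close>
  of size \<open>O(\<epsilon>)\<close>.\<close>

lemma convex_on_gradient_inequality:
  fixes f :: "'a::real_inner \<Rightarrow> real"
  assumes cv: "convex_on UNIV f" and d: "(f has_derivative (\<lambda>v. g \<bullet> v)) (at x)"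
  shows "g \<bullet> (y - x) \<le> f y - f x"
proof -
  define p where "p s = f (x + s *\<^sub>R (y - x))" for s :: real
  have "convex_on UNIV p"
  proof (rule convex_onI)
    fix t a b :: real assume t: "t > 0" "t < 1"
    have "x + ((1 - t) *\<^sub>R a + t *\<^sub>R b) *\<^sub>R (y - x)
        = (1 - t) *\<^sub>R (x + a *\<^sub>R (y - x)) + t *\<^sub>R (x + b *\<^sub>R (y - x))"
      by (simp add: algebra_simps)
    then show "p ((1 - t) *\<^sub>R a + t *\<^sub>R b) \<le> (1 - t) * p a + t * p b"
      unfolding p_def using convex_onD[OF cv, of t] t by simp
  qed simp
  moreover have "(p has_field_derivative (g \<bullet> (y - x))) (at 0)"
  proof -
    have "((\<lambda>s. x + s *\<^sub>R (y - x)) has_derivative (\<lambda>s. s *\<^sub>R (y - x))) (at 0)"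
      by (auto intro!: derivative_eq_intros)
    moreover have "(f has_derivative (\<lambda>v. g \<bullet> v)) (at (x + 0 *\<^sub>R (y - x)))"
      using d by simp
    ultimately have "(p has_derivative (\<lambda>s. g \<bullet> (s *\<^sub>R (y - x)))) (at 0)"
      unfolding p_def using has_derivative_compose by blast
    then show ?thesis
      unfolding has_field_derivative_def by (simp add: mult.commute[of _ "g \<bullet> (y - x)"])
  qed
  ultimately show ?thesis
    using convex_on_imp_above_tangent[of UNIV p 0 1] unfolding p_def by simp
qed

lemma lipschitz_gradient_upper_bound:
  fixes f :: "'a::real_inner \<Rightarrow> real"
  assumes d: "\<And>z. (f has_derivative (\<lambda>v. gf z \<bullet> v)) (at z)"
    and Lip: "\<And>a b. norm (gf a - gf b) \<le> L * norm (a - b)" and L: "L \<ge> 0"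
  shows "f y \<le> f x + gf x \<bullet> (y - x) + L * (norm (y - x))\<^sup>2"
proof -
  define p where "p s = f (x + s *\<^sub>R (y - x))" for s :: real
  have "(p has_derivative (\<lambda>s. gf (x + z *\<^sub>R (y - x)) \<bullet> (s *\<^sub>R (y - x)))) (at z within {0..1})"
    for z
  proof -
    have "((\<lambda>s. x + s *\<^sub>R (y - x)) has_derivative (\<lambda>s. s *\<^sub>R (y - x))) (at z)"
      by (auto intro!: derivative_eq_intros)
    from has_derivative_compose[OF this d]
    show ?thesis unfolding p_def by (rule has_derivative_at_withinI)
  qed
  from mvt_very_simple[of 0 1 p, OF _ this] obtain z where z: "z \<in> {0..1}"
    and "p 1 - p 0 = gf (x + z *\<^sub>R (y - x)) \<bullet> ((1 - 0) *\<^sub>R (y - x))"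
    by auto
  then have mvt: "f y - f x = gf (x + z *\<^sub>R (y - x)) \<bullet> (y - x)"
    unfolding p_def by simp
  have "(gf (x + z *\<^sub>R (y - x)) - gf x) \<bullet> (y - x)
      \<le> norm (gf (x + z *\<^sub>R (y - x)) - gf x) * norm (y - x)"
    by (rule norm_cauchy_schwarz)
  also have "\<dots> \<le> L * (z * norm (y - x)) * norm (y - x)"
    using Lip[of "x + z *\<^sub>R (y - x)" x] z by (intro mult_right_mono) auto
  also have "\<dots> \<le> L * norm (y - x) * norm (y - x)"
    using z L by (intro mult_right_mono mult_left_mono) (auto simp: mult_left_le_one_le)
  finally show ?thesis
    using mvt by (simp add: inner_diff_left power2_eq_square mult.assoc)
qed

lemma lipschitz_gradient_norm_le:
  fixes f :: "'a::real_inner \<Rightarrow> real"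
  assumes d: "\<And>z. (f has_derivative (\<lambda>v. gf z \<bullet> v)) (at z)"
    and Lip: "\<And>a b. norm (gf a - gf b) \<le> L * norm (a - b)" and L: "L > 0"
    and min: "\<And>z. f x\<^sub>0 \<le> f z"
  shows "(norm (gf x))\<^sup>2 \<le> 4 * L * (f x - f x\<^sub>0)"
proof -
  define y where "y = x - (1 / (2 * L)) *\<^sub>R gf x"
  have "f x\<^sub>0 \<le> f y" by (rule min)
  also have "\<dots> \<le> f x + gf x \<bullet> (y - x) + L * (norm (y - x))\<^sup>2"
    using lipschitz_gradient_upper_bound[OF d Lip] L by simp
  also have "gf x \<bullet> (y - x) = - (1 / (2 * L)) * (norm (gf x))\<^sup>2"
    by (simp add: y_def power2_norm_eq_inner)
  also have "L * (norm (y - x))\<^sup>2 = (1 / (4 * L)) * (norm (gf x))\<^sup>2"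
    using L by (simp add: y_def power2_eq_square field_simps)
  finally show ?thesis using L by (simp add: field_simps)
qed

lemma gradient_step_norm_le:
  fixes u g :: "'a::real_inner"
  assumes descent: "\<Delta> \<le> g \<bullet> u" and grad: "(norm g)\<^sup>2 \<le> 4 * L * \<Delta>"
    and "\<Delta> \<ge> 0" "a \<ge> 0" "a * L \<le> \<alpha>"
  shows "(norm (u - a *\<^sub>R g))\<^sup>2 \<le> (norm u)\<^sup>2 - 2 * (1 - 2 * \<alpha>) * a * \<Delta>"
proof -
  have "a\<^sup>2 * (norm g)\<^sup>2 \<le> 4 * a * (a * L) * \<Delta>"
    using mult_left_mono[OF grad, of "a\<^sup>2"] by (simp add: power2_eq_square algebra_simps)
  also have "\<dots> \<le> 4 * a * \<alpha> * \<Delta>"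
    using assms(3-5) by (intro mult_right_mono mult_left_mono) auto
  finally have "a\<^sup>2 * (norm g)\<^sup>2 \<le> 4 * a * \<alpha> * \<Delta>" .
  moreover have "a * \<Delta> \<le> a * (g \<bullet> u)" using descent \<open>a \<ge> 0\<close> by (rule mult_left_mono)
  moreover have "(norm (u - a *\<^sub>R g))\<^sup>2 = (norm u)\<^sup>2 - 2 * a * (g \<bullet> u) + a\<^sup>2 * (norm g)\<^sup>2"
    unfolding power2_norm_eq_inner
    by (simp add: inner_simps inner_commute power2_eq_square algebra_simps)
  ultimately show ?thesis by (simp add: algebra_simps)
qed

lemma convex_gradient_step_norm_le:
  fixes f :: "'a::real_inner \<Rightarrow> real"
  assumes cv: "convex_on UNIV f" and d: "\<And>z. (f has_derivative (\<lambda>v. gf z \<bullet> v)) (at z)"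
    and Lip: "\<And>a b. norm (gf a - gf b) \<le> L * norm (a - b)" and "L > 0"
    and min: "\<And>z. f x\<^sub>0 \<le> f z" and "a \<ge> 0" "a * L \<le> \<alpha>"
  shows "(norm (x - x\<^sub>0 - a *\<^sub>R gf x))\<^sup>2 \<le> (norm (x - x\<^sub>0))\<^sup>2 - 2 * (1 - 2 * \<alpha>) * a * (f x - f x\<^sub>0)"
proof (rule gradient_step_norm_le)
  show "f x - f x\<^sub>0 \<le> gf x \<bullet> (x - x\<^sub>0)"
    using convex_on_gradient_inequality[OF cv d, of x x\<^sub>0] by (simp add: inner_diff_right)
  show "(norm (gf x))\<^sup>2 \<le> 4 * L * (f x - f x\<^sub>0)"
    by (rule lipschitz_gradient_norm_le[OF d Lip \<open>L > 0\<close> min])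
qed (use assms in auto)

lemma norm_add_squared_le_weighted:
  fixes p q :: "'a::real_inner"
  assumes "\<epsilon> > 0"
  shows "(norm (p + q))\<^sup>2 \<le> (1 + \<epsilon>) * (norm p)\<^sup>2 + (1 + 1 / \<epsilon>) * (norm q)\<^sup>2"
proof -
  have "0 \<le> (norm (sqrt \<epsilon> *\<^sub>R p - (1 / sqrt \<epsilon>) *\<^sub>R q))\<^sup>2" by simp
  also have "\<dots> = \<epsilon> * (norm p)\<^sup>2 + (norm q)\<^sup>2 / \<epsilon> - 2 * (p \<bullet> q)"
    using assms unfolding power2_norm_eq_inner
    by (simp add: inner_simps inner_commute power2_eq_square field_simps)
  moreover have "(norm (p + q))\<^sup>2 = (norm p)\<^sup>2 + 2 * (p \<bullet> q) + (norm q)\<^sup>2"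
    unfolding power2_norm_eq_inner by (simp add: inner_simps inner_commute power2_eq_square)
  ultimately show ?thesis by (simp add: algebra_simps add_divide_distrib)
qed

lemma norm_diff_squared_le:
  fixes p q :: "'a::real_inner"
  shows "(norm (p - q))\<^sup>2 \<le> 2 * (norm p)\<^sup>2 + 2 * (norm q)\<^sup>2"
proof -
  have "0 \<le> (norm (p + q))\<^sup>2" by simp
  then show ?thesis
    unfolding power2_norm_eq_inner by (simp add: inner_simps inner_commute)
qed

lemma norm_squared_le_card_mult:
  fixes x :: "real^'n"
  assumes "\<And>j. \<bar>x $ j\<bar> \<le> B"
  shows "(norm x)\<^sup>2 \<le> real CARD('n) * B\<^sup>2"
proof -
  have "(norm x)\<^sup>2 = (\<Sum>j\<in>UNIV. (x $ j)\<^sup>2)"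
    unfolding power2_norm_eq_inner inner_vec_def by (simp add: power2_eq_square)
  also have "\<dots> \<le> (\<Sum>j\<in>(UNIV::'n set). B\<^sup>2)"
    using assms by (intro sum_mono) (metis abs_ge_zero abs_le_square_iff abs_of_nonneg order_trans)
  finally show ?thesis by simp
qed

lemma taylor_remainder_component_le:
  fixes hf :: "real^'d \<Rightarrow> real^'c" and J :: "real^'d \<Rightarrow> real^'d^'c"
    and Hs :: "'c \<Rightarrow> real^'d \<Rightarrow> real^'d^'d"
  assumes dJ: "\<And>w. (hf has_derivative (\<lambda>v. J w *v v)) (at w)"
    and dH: "\<And>j w. ((\<lambda>u. J u $ j) has_derivative (\<lambda>v. Hs j w *v v)) (at w)"
    and bH: "\<And>j w. onorm (\<lambda>v. Hs j w *v v) \<le> G"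
  shows "\<bar>(hf (w - d) - hf w + J w *v d) $ j\<bar> \<le> G / 2 * (norm d)\<^sup>2"
proof -
  define \<gamma> where "\<gamma> s = w - s *\<^sub>R d" for s :: real
  define f where "f s = hf (\<gamma> s) $ j" for s
  define f1 where "f1 s = - ((J (\<gamma> s) $ j) \<bullet> d)" for s
  define f2 where "f2 s = (Hs j (\<gamma> s) *v d) \<bullet> d" for s
  have \<gamma>: "(\<gamma> has_derivative (\<lambda>s'. - (s' *\<^sub>R d))) (at s)" for s
    unfolding \<gamma>_def by (auto intro!: derivative_eq_intros)
  have mv_neg: "A *v (- (s *\<^sub>R x)) = (- s) *\<^sub>R (A *v x)" for A :: "real^'n^'m" and s x
    by (simp add: matrix_vector_mult_scaleR flip: scaleR_minus_left)
  have f1: "DERIV f s :> f1 s" for s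
  proof -
    from bounded_linear.has_derivative[OF bounded_linear_vec_nth has_derivative_compose[OF \<gamma> dJ]]
    have "(f has_derivative (\<lambda>s'. (J (\<gamma> s) *v (- (s' *\<^sub>R d))) $ j)) (at s)"
      unfolding f_def o_def .
    moreover have "(\<lambda>s'. (J (\<gamma> s) *v (- (s' *\<^sub>R d))) $ j) = (*) (f1 s)"
      by (auto simp: mv_neg matrix_vector_mul_component f1_def)
    ultimately show ?thesis by (simp add: has_field_derivative_def)
  qed
  have f2: "DERIV f1 s :> f2 s" for s
  proof -
    have "((\<lambda>s. J (\<gamma> s) $ j) has_derivative (\<lambda>s'. Hs j (\<gamma> s) *v (- (s' *\<^sub>R d)))) (at s)"
      using has_derivative_compose[OF \<gamma> dH] by (simp add: o_def)
    then have "(f1 has_derivative (\<lambda>s'. - ((Hs j (\<gamma> s) *v (- (s' *\<^sub>R d))) \<bullet> d))) (at s)"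
      unfolding f1_def by (auto intro!: derivative_eq_intros)
    moreover have "(\<lambda>s'. - ((Hs j (\<gamma> s) *v (- (s' *\<^sub>R d))) \<bullet> d)) = (*) (f2 s)"
      by (auto simp: mv_neg f2_def)
    ultimately show ?thesis by (simp add: has_field_derivative_def)
  qed
  define df where "df m = (if m = 0 then f else if m = 1 then f1 else f2)" for m :: nat
  have "\<forall>m t. m < 2 \<and> 0 \<le> t \<and> t \<le> 1 \<longrightarrow> DERIV (df m) t :> df (Suc m) t"
    using f1 f2 by (auto simp: df_def less_2_cases_iff)
  then obtain t where "f 1 = (\<Sum>m<2. df m 0 / fact m * 1 ^ m) + df 2 t / fact 2 * 1 ^ 2"
    using Maclaurin[of 1 2 df f] by (auto simp: df_def)
  then have "(hf (w - d) - hf w + J w *v d) $ j = f2 t / 2"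
    by (simp add: df_def numeral_2_eq_2 f_def f1_def \<gamma>_def matrix_vector_mul_component)
  moreover have "\<bar>f2 t\<bar> \<le> G * (norm d)\<^sup>2"
  proof -
    have "\<bar>f2 t\<bar> \<le> norm (Hs j (\<gamma> t) *v d) * norm d"
      unfolding f2_def by (rule Cauchy_Schwarz_ineq2)
    also have "\<dots> \<le> (G * norm d) * norm d"
      using onorm[OF matrix_vector_mul_bounded_linear, of "Hs j (\<gamma> t)" d] bH[of j "\<gamma> t"]
      by (intro mult_right_mono) (auto intro: order_trans[OF _ mult_right_mono])
    finally show ?thesis by (simp add: power2_eq_square mult.assoc)
  qed
  ultimately show ?thesis by (simp only: abs_divide)
qed

lemma taylor_remainder_norm_le:
  fixes hf :: "real^'d \<Rightarrow> real^'c" and J :: "real^'d \<Rightarrow> real^'d^'c"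
    and Hs :: "'c \<Rightarrow> real^'d \<Rightarrow> real^'d^'d"
  assumes "\<And>w. (hf has_derivative (\<lambda>v. J w *v v)) (at w)"
    and "\<And>j w. ((\<lambda>u. J u $ j) has_derivative (\<lambda>v. Hs j w *v v)) (at w)"
    and "\<And>j w. onorm (\<lambda>v. Hs j w *v v) \<le> G"
    and "G \<ge> 0" "(norm d)\<^sup>2 \<le> \<rho>"
  shows "(norm (hf (w - d) - hf w + J w *v d))\<^sup>2 \<le> real CARD('c) * (G / 2 * \<rho>)\<^sup>2"
proof (rule norm_squared_le_card_mult)
  fix j
  have "\<bar>(hf (w - d) - hf w + J w *v d) $ j\<bar> \<le> G / 2 * (norm d)\<^sup>2"
    using assms(1-3) by (rule taylor_remainder_component_le)
  also have "\<dots> \<le> G / 2 * \<rho>" using assms(4,5) by (intro mult_left_mono) auto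
  finally show "\<bar>(hf (w - d) - hf w + J w *v d) $ j\<bar> \<le> G / 2 * \<rho>" .
qed

lemma Phi_obj_nonneg: "0 \<le> Phi_obj n \<eta> H a g v"
  unfolding Phi_obj_def by (intro mult_nonneg_nonneg sum_nonneg) auto

lemma regularized_minimizer_norm_le:
  fixes f :: "'a::real_normed_vector \<Rightarrow> real"
  assumes min: "f v + \<epsilon>\<^sup>2 / 2 * (norm v)\<^sup>2 \<le> f v' + \<epsilon>\<^sup>2 / 2 * (norm v')\<^sup>2"
    and "0 \<le> f v" "f v' \<le> \<epsilon>\<^sup>2" "(norm v')\<^sup>2 \<le> V" "\<epsilon> \<noteq> 0"
  shows "(norm v)\<^sup>2 \<le> V + 2"
proof -
  have "\<epsilon>\<^sup>2 / 2 * (norm v)\<^sup>2 \<le> \<epsilon>\<^sup>2 + \<epsilon>\<^sup>2 / 2 * V"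
    using assms(1-3) mult_left_mono[OF assms(4), of "\<epsilon>\<^sup>2 / 2"] by simp
  then have "\<epsilon>\<^sup>2 / 2 * (norm v)\<^sup>2 \<le> \<epsilon>\<^sup>2 / 2 * (V + 2)" by (simp add: algebra_simps)
  then show ?thesis using \<open>\<epsilon> \<noteq> 0\<close> by (simp add: mult_le_cancel_left_pos)
qed

lemma perturbed_gradient_step_norm_le:
  fixes u g r \<delta> :: "'a::real_inner"
  assumes "\<epsilon> > 0" "0 \<le> \<alpha>" "\<alpha> \<le> 1 / 2" "0 \<le> a" "0 \<le> \<Delta>"
    and step: "(norm (u - a *\<^sub>R g))\<^sup>2 \<le> (norm u)\<^sup>2 - 2 * (1 - 2 * \<alpha>) * a * \<Delta>"
  shows "(norm ((u - a *\<^sub>R g) + (r - \<delta>)))\<^sup>2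
    \<le> (1 + \<epsilon>) * (norm u)\<^sup>2 - 2 * (1 - 3 * \<alpha>) * a * \<Delta>
      + 2 * (1 + 1 / \<epsilon>) * (norm r)\<^sup>2 + 2 * (1 + 1 / \<epsilon>) * (norm \<delta>)\<^sup>2"
proof -
  have "(norm ((u - a *\<^sub>R g) + (r - \<delta>)))\<^sup>2
      \<le> (1 + \<epsilon>) * (norm (u - a *\<^sub>R g))\<^sup>2 + (1 + 1 / \<epsilon>) * (norm (r - \<delta>))\<^sup>2"
    using \<open>\<epsilon> > 0\<close> by (rule norm_add_squared_le_weighted)
  also have "\<dots> \<le> (1 + \<epsilon>) * ((norm u)\<^sup>2 - 2 * (1 - 2 * \<alpha>) * a * \<Delta>)
      + (1 + 1 / \<epsilon>) * (2 * (norm r)\<^sup>2 + 2 * (norm \<delta>)\<^sup>2)"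
    using assms(1) step norm_diff_squared_le by (intro add_mono mult_left_mono) auto
  also have "(1 + \<epsilon>) * ((norm u)\<^sup>2 - 2 * (1 - 2 * \<alpha>) * a * \<Delta>)
      \<le> (1 + \<epsilon>) * (norm u)\<^sup>2 - 2 * (1 - 3 * \<alpha>) * a * \<Delta>"
  proof -
    have "0 \<le> (\<epsilon> * (1 - 2 * \<alpha>) + \<alpha>) * (a * \<Delta>)"
      using assms(1-5) by (intro mult_nonneg_nonneg) auto
    then show ?thesis by (simp add: algebra_simps)
  qed
  finally show ?thesis by (simp add: algebra_simps)
qed

lemma young_weight_bounds:
  fixes \<epsilon> X c :: real
  assumes "\<epsilon> > 0" "X \<ge> 0" "c \<ge> 0"
  shows "2 * (1 + 1 / \<epsilon>) * (c * (X * \<epsilon> / 2)\<^sup>2) \<le> (3 * \<epsilon> + 2) / 4 * c * (4 + X)\<^sup>2 * \<epsilon>"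
    and "2 * (1 + 1 / \<epsilon>) \<le> (3 * \<epsilon> + 2) / \<epsilon>"
proof -
  have "(2 * \<epsilon> + 2) * X\<^sup>2 \<le> (3 * \<epsilon> + 2) * (4 + X)\<^sup>2"
    using assms by (intro mult_mono power_mono) auto
  then have "c * \<epsilon> / 4 * ((2 * \<epsilon> + 2) * X\<^sup>2) \<le> c * \<epsilon> / 4 * ((3 * \<epsilon> + 2) * (4 + X)\<^sup>2)"
    using assms by (intro mult_left_mono) auto
  moreover have "2 * (1 + 1 / \<epsilon>) * (c * (X * \<epsilon> / 2)\<^sup>2) = c * \<epsilon> / 4 * ((2 * \<epsilon> + 2) * X\<^sup>2)"
    using assms by (simp add: field_simps power2_eq_square)
  ultimately show "2 * (1 + 1 / \<epsilon>) * (c * (X * \<epsilon> / 2)\<^sup>2) \<le> (3 * \<epsilon> + 2) / 4 * c * (4 + X)\<^sup>2 * \<epsilon>"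
    by (simp add: algebra_simps)
  show "2 * (1 + 1 / \<epsilon>) \<le> (3 * \<epsilon> + 2) / \<epsilon>" using assms by (simp add: field_simps)
qed

lemma perturbed_gradient_step_le:
  fixes u g r \<delta> :: "'a::real_inner"
  assumes "\<epsilon> > 0" "0 \<le> \<alpha>" "\<alpha> \<le> 1 / 2" "0 \<le> a" "0 \<le> \<Delta>" "0 \<le> X" "0 \<le> c"
    and step: "(norm (u - a *\<^sub>R g))\<^sup>2 \<le> (norm u)\<^sup>2 - 2 * (1 - 2 * \<alpha>) * a * \<Delta>"
    and rem: "(norm r)\<^sup>2 \<le> c * (X * \<epsilon> / 2)\<^sup>2"
  shows "(norm ((u - a *\<^sub>R g) + (r - \<delta>)))\<^sup>2
    \<le> (1 + \<epsilon>) * (norm u)\<^sup>2 - 2 * (1 - 3 * \<alpha>) * a * \<Delta>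
      + (3 * \<epsilon> + 2) / 4 * c * (4 + X)\<^sup>2 * \<epsilon> + (3 * \<epsilon> + 2) / \<epsilon> * (norm \<delta>)\<^sup>2"
proof -
  have "2 * (1 + 1 / \<epsilon>) * (norm r)\<^sup>2 \<le> (3 * \<epsilon> + 2) / 4 * c * (4 + X)\<^sup>2 * \<epsilon>"
    by (rule order_trans[OF mult_left_mono[OF rem] young_weight_bounds(1)]) (use assms in auto)
  moreover have "2 * (1 + 1 / \<epsilon>) * (norm \<delta>)\<^sup>2 \<le> (3 * \<epsilon> + 2) / \<epsilon> * (norm \<delta>)\<^sup>2"
    using young_weight_bounds(2)[OF \<open>\<epsilon> > 0\<close>] by (intro mult_right_mono) auto
  ultimately show ?thesis
    using perturbed_gradient_step_norm_le[OF assms(1-5) step, of r \<delta>] by linarith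
qed

theorem mainTheorem12:
  fixes n T :: nat
    and h :: "nat \<Rightarrow> real^'d \<Rightarrow> real^'c"
    and Jh :: "nat \<Rightarrow> real^'d \<Rightarrow> real^'d^'c"
    and Hh :: "nat \<Rightarrow> 'c \<Rightarrow> real^'d \<Rightarrow> real^'d^'d"
    and \<phi> :: "nat \<Rightarrow> real^'c \<Rightarrow> real"
    and g\<phi> :: "nat \<Rightarrow> real^'c \<Rightarrow> real^'c"
    and hs :: "nat \<Rightarrow> real^'c"
    and L G V D \<epsilon> \<alpha> :: real
    and \<eta> :: "nat \<Rightarrow> real"
    and \<alpha>i :: "nat \<Rightarrow> nat \<Rightarrow> real"
    and w vreg :: "nat \<Rightarrow> real^'d"
  assumes n_pos: "n \<ge> 1"
    and hs_min: "\<And>i x. i \<in> {1..n} \<Longrightarrow> \<phi> i (hs i) \<le> \<phi> i x"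
    and A_grad: "\<And>i x. i \<in> {1..n} \<Longrightarrow> (\<phi> i has_derivative (\<lambda>v. g\<phi> i x \<bullet> v)) (at x)"
    and A_convex: "\<And>i. i \<in> {1..n} \<Longrightarrow> convex_on UNIV (\<phi> i)"
    and A_bdd: "\<And>i. i \<in> {1..n} \<Longrightarrow> bdd_below (range (\<phi> i))"
    and A_smooth: "\<And>i x y. i \<in> {1..n} \<Longrightarrow> norm (g\<phi> i x - g\<phi> i y) \<le> L * norm (x - y)"
    and B_jac: "\<And>i w. i \<in> {1..n} \<Longrightarrow> (h i has_derivative (\<lambda>v. Jh i w *v v)) (at w)"
    and B_hess: "\<And>i j w. i \<in> {1..n} \<Longrightarrow>
                   ((\<lambda>u. Jh i u $ j) has_derivative (\<lambda>v. Hh i j w *v v)) (at w)"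
    and B_cont: "\<And>i j. i \<in> {1..n} \<Longrightarrow> continuous_on UNIV (Hh i j)"
    and G_pos: "G > 0"
    and B_bound: "\<And>i j w. i \<in> {1..n} \<Longrightarrow> onorm (\<lambda>v. Hh i j w *v v) \<le> G"
    and eps_pos: "\<epsilon> > 0"
    and D_pos: "D > 0"
    and eta_def: "\<And>t. \<eta> t = D * sqrt \<epsilon>"
    and alpha_pos: "\<And>i t. i \<in> {1..n} \<Longrightarrow> \<alpha>i i t > 0"
    and alpha_range: "0 < \<alpha>" "\<alpha> < 1/3"
    and alpha_le: "\<And>i t. i \<in> {1..n} \<Longrightarrow> t < T \<Longrightarrow> \<alpha>i i t \<le> \<alpha> / L"
    and vreg_min: "\<And>t u. t < T \<Longrightarrow>
        Psi_obj \<epsilon> n (\<eta> t) (\<lambda>i. Jh i (w t)) (\<lambda>i. \<alpha>i i t) (\<lambda>i. g\<phi> i (h i (w t))) (vreg t)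
        \<le> Psi_obj \<epsilon> n (\<eta> t) (\<lambda>i. Jh i (w t)) (\<lambda>i. \<alpha>i i t) (\<lambda>i. g\<phi> i (h i (w t))) u"
    and alg: "\<And>t. t < T \<Longrightarrow> w (Suc t) = w t - \<eta> t *\<^sub>R vreg t"
    and V_pos: "V > 0"
    and C: "\<And>t. t < T \<Longrightarrow> \<exists>vh. (norm vh)\<^sup>2 \<le> V \<and>
        Phi_obj n (\<eta> t) (\<lambda>i. Jh i (w t)) (\<lambda>i. \<alpha>i i t) (\<lambda>i. g\<phi> i (h i (w t))) vh \<le> \<epsilon>\<^sup>2"
  shows "\<forall>i\<in>{1..n}. \<forall>t<T.
     (norm (h i (w (Suc t)) - hs i))\<^sup>2
       \<le> (1 + \<epsilon>) * (norm (h i (w t) - hs i))\<^sup>2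
         - 2 * (1 - 3 * \<alpha>) * \<alpha>i i t * (\<phi> i (h i (w t)) - \<phi> i (hs i))
         + (3 * \<epsilon> + 2) / 4 * real CARD('c) * (4 + (V + 2) * G * D\<^sup>2)\<^sup>2 * \<epsilon>
         + (3 * \<epsilon> + 2) / \<epsilon> *
             (norm (\<eta> t *\<^sub>R (Jh i (w t) *v vreg t) - \<alpha>i i t *\<^sub>R g\<phi> i (h i (w t))))\<^sup>2"
proof (intro ballI allI impI)
  fix i t assume i: "i \<in> {1..n}" and tT: "t < T"
  let ?x = "h i (w t)" and ?a = "\<alpha>i i t" and ?J = "Jh i (w t)"
  let ?g = "g\<phi> i ?x" and ?\<Delta> = "\<phi> i ?x - \<phi> i (hs i)"
  define d where "d = \<eta> t *\<^sub>R vreg t"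
  let ?X = "(V + 2) * G * D\<^sup>2" and ?\<delta> = "\<eta> t *\<^sub>R (?J *v vreg t) - ?a *\<^sub>R ?g"
  have a_pos: "?a > 0" and a_le: "?a \<le> \<alpha> / L" using alpha_pos[OF i] alpha_le[OF i tT] .
  then have L_pos: "L > 0" using alpha_range by (smt (verit) divide_le_0_iff)
  obtain vh where "(norm vh)\<^sup>2 \<le> V"
    and "Phi_obj n (\<eta> t) (\<lambda>i. Jh i (w t)) (\<lambda>i. \<alpha>i i t) (\<lambda>i. g\<phi> i (h i (w t))) vh \<le> \<epsilon>\<^sup>2"
    using C[OF tT] by blast
  then have "(norm (vreg t))\<^sup>2 \<le> V + 2"
    using vreg_min[OF tT, of vh] eps_pos
    by (intro regularized_minimizer_norm_le[where f = "Phi_obj n _ _ _ _"])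
      (auto simp: Psi_obj_def Phi_obj_nonneg)
  then have d_bd: "(norm d)\<^sup>2 \<le> D\<^sup>2 * \<epsilon> * (V + 2)"
    using eps_pos by (simp add: d_def eta_def power_mult_distrib mult_left_mono)
  have X_eq: "G / 2 * (D\<^sup>2 * \<epsilon> * (V + 2)) = ?X * \<epsilon> / 2" by (simp add: algebra_simps)
  have rem: "(norm (h i (w (Suc t)) - ?x + ?J *v d))\<^sup>2 \<le> real CARD('c) * (?X * \<epsilon> / 2)\<^sup>2"
    using taylor_remainder_norm_le[OF B_jac[OF i] B_hess[OF i] B_bound[OF i] _ d_bd] G_pos
    unfolding alg[OF tT] d_def[symmetric] X_eq by simp
  have decomp: "(?x - hs i - ?a *\<^sub>R ?g) + ((h i (w (Suc t)) - ?x + ?J *v d) - ?\<delta>)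
      = h i (w (Suc t)) - hs i"
    by (simp add: d_def matrix_vector_mult_scaleR)
  have "(norm (?x - hs i - ?a *\<^sub>R ?g))\<^sup>2 \<le> (norm (?x - hs i))\<^sup>2 - 2 * (1 - 2 * \<alpha>) * ?a * ?\<Delta>"
    using a_pos a_le L_pos
    by (intro convex_gradient_step_norm_le[OF A_convex A_grad A_smooth L_pos hs_min] i)
      (auto simp: field_simps)
  from perturbed_gradient_step_le[OF eps_pos _ _ _ _ _ _ this rem, of ?\<delta>]
  show "(norm (h i (w (Suc t)) - hs i))\<^sup>2 \<le> (1 + \<epsilon>) * (norm (?x - hs i))\<^sup>2
      - 2 * (1 - 3 * \<alpha>) * ?a * ?\<Delta> + (3 * \<epsilon> + 2) / 4 * real CARD('c) * (4 + ?X)\<^sup>2 * \<epsilon>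
      + (3 * \<epsilon> + 2) / \<epsilon> * (norm ?\<delta>)\<^sup>2"
    using alpha_range a_pos hs_min[OF i] V_pos G_pos unfolding decomp by auto
qed

end
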